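(* Let $d \ge 2$ be an integer. For $\nu > 0$ and $\alpha \ge 0$ let $g_1(\nu, \alpha; d) = \left(\nu + 1 + (d-1) \alpha \nu \right) e^{-\frac{\nu^2 + (d-1) \alpha^2}{2}}$, and define $$h_1(\nu;d) = (\nu+1)^2 + 4 \nu^2 (d-1), \qquad h_2(\nu;d) = \frac{(\nu + 1) \sqrt{h_1(\nu;d)} - (\nu+1)^2}{4 \nu^2 (d-1)} - \frac{1}{2},$$ $$g_2(\nu; d) = \frac{\nu + 1 + \sqrt{h_1(\nu;d)}}{2}\, e^{-\frac{\nu^2}{2} + h_2(\nu;d)}.$$ Then $g_1(\nu, \alpha; d) \le g_2(\nu; d)$ for all $\nu > 0$ and $\alpha \ge 0$. *)

theory Defs
  imports Complex_Main
begin

definition g1 :: "real \<Rightarrow> real \<Rightarrow> nat \<Rightarrow> real" where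
  "g1 \<nu> \<alpha> d = (\<nu> + 1 + (real d - 1) * \<alpha> * \<nu>) * exp (- ((\<nu>^2 + (real d - 1) * \<alpha>^2) / 2))"

definition h1 :: "real \<Rightarrow> nat \<Rightarrow> real" where
  "h1 \<nu> d = (\<nu> + 1)^2 + 4 * \<nu>^2 * (real d - 1)"

definition h2 :: "real \<Rightarrow> nat \<Rightarrow> real" where
  "h2 \<nu> d = ((\<nu> + 1) * sqrt (h1 \<nu> d) - (\<nu> + 1)^2) / (4 * \<nu>^2 * (real d - 1)) - 1/2"

definition g2 :: "real \<Rightarrow> nat \<Rightarrow> real" where
  "g2 \<nu> d = (\<nu> + 1 + sqrt (h1 \<nu> d)) / 2 * exp (- (\<nu>^2) / 2 + h2 \<nu> d)"

end

theory Submission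
  imports Defs
begin

(*
  Up to the factor exp (-\<nu>^2/2), g1 is the function (\<nu> + 1 + D\<nu>\<alpha>) exp (-D\<alpha>^2/2) of \<alpha>,
  where D = d - 1. Its critical point a solves the quadratic a (\<nu> + 1 + D\<nu>a) = \<nu>, whose
  positive root is expressed through sqrt (h1 \<nu> d), and g2 is exactly the value of g1 at a.
  The critical point is a global maximum: with M = \<nu> + 1 + D\<nu>a we have
  \<nu> + 1 + D\<nu>\<alpha> = M (1 + Da(\<alpha> - a)) and
  1 + Da(\<alpha> - a) \<le> 1 + D(\<alpha>^2 - a^2)/2 \<le> exp (D(\<alpha>^2 - a^2)/2).
*)

lemma affine_mult_exp_neg_square_le_critical:
  fixes c v D a x :: real
  assumes "D \<ge> 0" and pos: "c + D * v * a > 0" and critical: "a * (c + D * v * a) = v"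
  shows "(c + D * v * x) * exp (- (D * x^2 / 2)) \<le> (c + D * v * a) * exp (- (D * a^2 / 2))"
proof -
  define M where "M = c + D * v * a"
  have "M * (1 + D * a * (x - a)) = M + D * (a * M) * (x - a)"
    by (simp add: algebra_simps)
  also have "\<dots> = c + D * v * x"
    using critical unfolding M_def by (simp add: algebra_simps)
  finally have "c + D * v * x = M * (1 + D * a * (x - a))" ..
  also have "\<dots> \<le> M * (1 + D * (x^2 - a^2) / 2)"
  proof -
    have "D * (x - a)^2 \<ge> 0" using \<open>D \<ge> 0\<close> by simp
    then have "D * a * (x - a) \<le> D * (x^2 - a^2) / 2"
      by (simp add: power2_eq_square algebra_simps)
    then show ?thesis using pos unfolding M_def by (intro mult_left_mono) auto
  qed
  also have "\<dots> \<le> M * exp (D * (x^2 - a^2) / 2)"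
    using pos unfolding M_def by (intro mult_left_mono exp_ge_add_one_self) auto
  finally have "(c + D * v * x) * exp (- (D * x^2 / 2))
      \<le> M * exp (D * (x^2 - a^2) / 2) * exp (- (D * x^2 / 2))"
    by (intro mult_right_mono) auto
  also have "\<dots> = M * exp (- (D * a^2 / 2))"
    by (simp add: mult.assoc exp_add[symmetric] field_simps)
  finally show ?thesis unfolding M_def .
qed

lemma g1_eq:
  "g1 \<nu> \<alpha> d = exp (- (\<nu>^2 / 2))
     * ((\<nu> + 1 + (real d - 1) * \<nu> * \<alpha>) * exp (- ((real d - 1) * \<alpha>^2 / 2)))"
proof -
  have "exp (- ((\<nu>^2 + (real d - 1) * \<alpha>^2) / 2))
      = exp (- (\<nu>^2 / 2)) * exp (- ((real d - 1) * \<alpha>^2 / 2))"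
    by (simp add: exp_add[symmetric] add_divide_distrib)
  then show ?thesis unfolding g1_def by (simp add: algebra_simps)
qed

definition g1_argmax :: "real \<Rightarrow> nat \<Rightarrow> real" where
  "g1_argmax \<nu> d = (sqrt (h1 \<nu> d) - (\<nu> + 1)) / (2 * \<nu> * (real d - 1))"

context
  fixes d :: nat and \<nu> :: real
  assumes d: "d \<ge> 2" and \<nu>: "\<nu> > 0"
begin

private abbreviation "D \<equiv> real d - 1"
private abbreviation "s \<equiv> sqrt (h1 \<nu> d)"
private abbreviation "a \<equiv> g1_argmax \<nu> d"

private lemma D_ge_1: "D \<ge> 1"
  using d by simp

private lemma sqrt_h1_nonneg: "s \<ge> 0"
  and sqrt_h1_square: "s^2 = (\<nu> + 1)^2 + 4 * \<nu>^2 * D"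
proof -
  have "h1 \<nu> d \<ge> 0" using D_ge_1 unfolding h1_def by simp
  then show "s \<ge> 0" "s^2 = (\<nu> + 1)^2 + 4 * \<nu>^2 * D"
    by (simp_all only: real_sqrt_ge_zero real_sqrt_pow2) (simp add: h1_def)
qed

lemma g1_argmax_factor: "\<nu> + 1 + D * \<nu> * a = (\<nu> + 1 + s) / 2"
  using \<nu> D_ge_1 unfolding g1_argmax_def by (simp add: field_simps)

lemma g1_argmax_critical: "a * (\<nu> + 1 + D * \<nu> * a) = \<nu>"
proof -
  have "a * (\<nu> + 1 + D * \<nu> * a) = (s^2 - (\<nu> + 1)^2) / (4 * \<nu> * D)"
    unfolding g1_argmax_factor using \<nu> D_ge_1
    by (simp add: g1_argmax_def field_simps power2_eq_square)
  also have "\<dots> = \<nu>"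
    unfolding sqrt_h1_square using \<nu> D_ge_1 by (simp add: field_simps power2_eq_square)
  finally show ?thesis .
qed

lemma h2_eq_g1_argmax: "h2 \<nu> d = - (D * a^2 / 2)"
proof -
  have "D * a^2 = (s - (\<nu> + 1))^2 / (4 * \<nu>^2 * D)"
    using \<nu> D_ge_1
    by (simp add: g1_argmax_def power_divide power_mult_distrib power2_eq_square[of D])
  also have "(s - (\<nu> + 1))^2 = 2 * (\<nu> + 1)^2 + 4 * \<nu>^2 * D - 2 * s * (\<nu> + 1)"
    unfolding power2_diff sqrt_h1_square by simp
  finally show ?thesis
    unfolding h2_def using \<nu> D_ge_1 by (simp add: field_simps power2_eq_square)
qed

lemma g2_eq_g1_argmax: "g2 \<nu> d = g1 \<nu> a d"
  unfolding g2_def g1_eq h2_eq_g1_argmax g1_argmax_factor[symmetric]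
  by (simp add: exp_add[symmetric] algebra_simps)

lemma g1_le_g1_argmax: "g1 \<nu> \<alpha> d \<le> g1 \<nu> a d"
proof -
  have "\<nu> + 1 + D * \<nu> * a > 0"
    unfolding g1_argmax_factor using \<nu> sqrt_h1_nonneg
    by (intro divide_pos_pos add_pos_nonneg) auto
  then show ?thesis
    unfolding g1_eq using D_ge_1 g1_argmax_critical
    by (intro mult_left_mono affine_mult_exp_neg_square_le_critical) auto
qed

end

theorem lemma3:
  fixes d :: nat and \<nu> \<alpha> :: real
  assumes "d \<ge> 2" and "\<nu> > 0" and "\<alpha> \<ge> 0"
  shows "g1 \<nu> \<alpha> d \<le> g2 \<nu> d"
  \<comment> \<open>The bound holds for every real \<alpha>.\<close>
  using g1_le_g1_argmax g2_eq_g1_argmax assms(1,2) by simp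

end
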